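(* For all $n \ge 2$, $l(K_n \,\square\, K_2) \le 5n - 4$.
   Context: All graphs are simple and undirected; $K_n$ is the complete graph on $n$ vertices. Letters $x,y$ alternate in a word $w$ if deleting all other letters from $w$ yields $xyxy\ldots$ or $yxyx\ldots$ (of either parity). A word $w$ over $V(G)$ represents $G$ if every vertex occurs in $w$ and for all distinct $x,y$, $xy\in E(G)$ iff $x,y$ alternate in $w$; $l(G)$ is the minimum length of a word representing $G$. The Cartesian product $G\,\square\,H$ has vertex set $V(G)\times V(H)$, with $(u,v)$ adjacent to $(u',v')$ iff either $u=u'$ and $vv'\in E(H)$, or $v=v'$ and $uu'\in E(G)$. *)

theory Defs
  imports Main "HOL-Library.Extended_Nat"
begin

text \<open>A simple graph: a vertex set together with an (intended symmetric, irreflexive)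
  adjacency relation.\<close>
type_synonym 'a graph = "'a set \<times> ('a \<Rightarrow> 'a \<Rightarrow> bool)"

definition verts :: "'a graph \<Rightarrow> 'a set" where "verts G = fst G"
definition adj :: "'a graph \<Rightarrow> 'a \<Rightarrow> 'a \<Rightarrow> bool" where "adj G = snd G"

text \<open>Letters x, y alternate in w: deleting all other letters yields xyxy... or yxyx...,
  i.e. the restricted word has no two equal consecutive letters.\<close>
definition alternate :: "'a list \<Rightarrow> 'a \<Rightarrow> 'a \<Rightarrow> bool" where
  "alternate w x y = successively (\<noteq>) (filter (\<lambda>z. z = x \<or> z = y) w)"

definition represents :: "'a graph \<Rightarrow> 'a list \<Rightarrow> bool" where
  "represents G w \<longleftrightarrow> set w = verts G \<and>
     (\<forall>x\<in>verts G. \<forall>y\<in>verts G. x \<noteq> y \<longrightarrow> (adj G x y \<longleftrightarrow> alternate w x y))"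

text \<open>Minimum length of a representing word (\<infinity> if G is not word-representable).\<close>
definition wrl :: "'a graph \<Rightarrow> enat" where
  "wrl G = (INF w \<in> {w. represents G w}. enat (length w))"

definition complete_graph :: "nat \<Rightarrow> nat graph" where
  "complete_graph n = ({0..<n}, \<lambda>x y. x \<noteq> y)"

definition cart_prod :: "'a graph \<Rightarrow> 'b graph \<Rightarrow> ('a \<times> 'b) graph" where
  "cart_prod G H = (verts G \<times> verts H,
     \<lambda>(u, v) (u', v'). (u = u' \<and> adj H v v') \<or> (v = v' \<and> adj G u u'))"

end

theory Submission
  imports Defs
begin

text \<open>Write the vertices of \<open>K\<^sub>n \<box> K\<^sub>2\<close> as \<open>(i, c)\<close> with \<open>i \<le> m = n - 1\<close>, \<open>c < 2\<close>. The word
  \<open>(0,0)(0,1)(1,0)(1,1)\<dots>(m-1,0)(m-1,1)(m,0) \<cdot> (0,0)(1,0)\<dots>(m-1,0)(m,1)(m,0) \<cdot>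
  (0,1)(0,0)(1,1)(1,0)\<dots>(m-2,1)(m-2,0)\<close> has length \<open>5m + 1 = 5n - 4\<close>. Each of its three blocks
  lists its letters in strictly increasing order of a rank (\<open>2i + c\<close> in the first block,
  \<open>2i + 1 - c\<close> in the other two), so the restriction of the word to two letters is a concatenation
  of at most three restrictions \<open>xy\<close> or \<open>yx\<close>, and alternation becomes a finite case distinction
  on which blocks contain the two letters.\<close>

lemma filter_two_sorted_by_rank:
  fixes r :: "'a \<Rightarrow> 'b::linorder"
  assumes "sorted_wrt (<) (map r xs)" and "r x \<noteq> r y"
  shows "filter (\<lambda>z. z = x \<or> z = y) xs =
    filter (\<lambda>z. z \<in> set xs) (if r x < r y then [x, y] else [y, x])"
  using assms
proof (induction xs)
  case (Cons a xs)
  then have "r a < r z" if "z \<in> set xs" for z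
    using that by simp
  with Cons show ?case
    by (cases "a = x"; cases "a = y") (auto simp: filter_empty_conv)
qed simp

definition rungs :: "'a \<Rightarrow> 'a \<Rightarrow> nat \<Rightarrow> (nat \<times> 'a) list" where
  "rungs a b m = concat (map (\<lambda>i. [(i, a), (i, b)]) [0..<m])"

lemma set_rungs [simp]: "set (rungs a b m) = {0..<m} \<times> {a, b}"
  by (auto simp: rungs_def)

lemma length_rungs [simp]: "length (rungs a b m) = 2 * m"
  by (induction m) (simp_all add: rungs_def)

lemma sorted_rungs:
  assumes "f a < f b" and "f b < f a + 2"
  shows "sorted_wrt (<) (map (\<lambda>(i, c). 2 * i + f c) (rungs a b m))"
  using assms by (induction m) (auto simp: rungs_def sorted_wrt_append)

definition prism_word :: "nat \<Rightarrow> (nat \<times> nat) list" where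
  "prism_word m =
    rungs 0 1 m @ [(m, 0)] @ map (\<lambda>i. (i, 0)) [0..<m] @ [(m, 1), (m, 0)] @ rungs 1 0 (m - 1)"

lemma alternate_prism_word_iff:
  assumes "i \<le> m" "j \<le> m" "c < 2" "d < 2" "(i, c) \<noteq> (j, d)"
  shows "alternate (prism_word m) (i, c) (j, d) \<longleftrightarrow> i = j \<or> c = d"
proof -
  define r1 :: "nat \<times> nat \<Rightarrow> nat" where "r1 = (\<lambda>(i, c). 2 * i + c)"
  define r2 :: "nat \<times> nat \<Rightarrow> nat" where "r2 = (\<lambda>(i, c). 2 * i + (1 - c))"
  define B1 :: "(nat \<times> nat) list" where "B1 = rungs 0 1 m @ [(m, 0)]"
  define B2 :: "(nat \<times> nat) list" where "B2 = map (\<lambda>i. (i, 0)) [0..<m] @ [(m, 1), (m, 0)]"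
  define B3 :: "(nat \<times> nat) list" where "B3 = rungs 1 0 (m - 1)"
  have r1_neq: "r1 (i, c) \<noteq> r1 (j, d)" and r2_neq: "r2 (i, c) \<noteq> r2 (j, d)"
    using assms by (auto simp: r1_def r2_def) presburger+
  have sorted_B1: "sorted_wrt (<) (map r1 B1)"
    using sorted_rungs[where f = "\<lambda>c. c" and a = 0 and b = 1 and m = m]
    by (auto simp: r1_def B1_def sorted_wrt_append)
  have sorted_B2: "sorted_wrt (<) (map r2 B2)"
    by (auto simp: r2_def B2_def sorted_wrt_append sorted_wrt_map)
  have sorted_B3: "sorted_wrt (<) (map r2 B3)"
    using sorted_rungs[where f = "\<lambda>c. 1 - c" and a = 1 and b = 0 and m = "m - 1"]
    by (simp add: r2_def B3_def)
  have "prism_word m = B1 @ B2 @ B3"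
    by (simp add: prism_word_def B1_def B2_def B3_def)
  then have "filter (\<lambda>z. z = (i, c) \<or> z = (j, d)) (prism_word m) =
      filter (\<lambda>z. z \<in> set B1) (if r1 (i, c) < r1 (j, d) then [(i, c), (j, d)] else [(j, d), (i, c)]) @
      filter (\<lambda>z. z \<in> set B2) (if r2 (i, c) < r2 (j, d) then [(i, c), (j, d)] else [(j, d), (i, c)]) @
      filter (\<lambda>z. z \<in> set B3) (if r2 (i, c) < r2 (j, d) then [(i, c), (j, d)] else [(j, d), (i, c)])"
    by (simp only: filter_append filter_two_sorted_by_rank[OF sorted_B1 r1_neq]
        filter_two_sorted_by_rank[OF sorted_B2 r2_neq] filter_two_sorted_by_rank[OF sorted_B3 r2_neq])
  moreover have "(k, e) \<in> set B1 \<longleftrightarrow> k < m \<or> e = 0"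
    and "(k, e) \<in> set B2 \<longleftrightarrow> e = 0 \<or> k = m"
    and "(k, e) \<in> set B3 \<longleftrightarrow> k + 1 < m"
    if "k \<le> m" "e < 2" for k e
    using that by (auto simp: B1_def B2_def B3_def)
  ultimately show ?thesis
    using assms unfolding alternate_def r1_def r2_def
    by (cases "c = 0"; cases "d = 0"; cases i j rule: linorder_cases) auto
qed

lemma length_prism_word: "0 < m \<Longrightarrow> length (prism_word m) = 5 * m + 1"
  by (simp add: prism_word_def)

lemma verts_complete_graph [simp]: "verts (complete_graph n) = {0..<n}"
  by (simp add: complete_graph_def verts_def)

lemma adj_complete_graph [simp]: "adj (complete_graph n) x y \<longleftrightarrow> x \<noteq> y"
  by (simp add: complete_graph_def adj_def)

lemma verts_cart_prod [simp]: "verts (cart_prod G H) = verts G \<times> verts H"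
  by (simp add: cart_prod_def verts_def)

lemma adj_cart_prod [simp]:
  "adj (cart_prod G H) (u, v) (u', v') \<longleftrightarrow> u = u' \<and> adj H v v' \<or> v = v' \<and> adj G u u'"
  by (simp add: cart_prod_def adj_def)

lemma represents_prism_word:
  "represents (cart_prod (complete_graph (Suc m)) (complete_graph 2)) (prism_word m)"
  unfolding represents_def
proof (intro conjI ballI impI)
  show "set (prism_word m) = verts (cart_prod (complete_graph (Suc m)) (complete_graph 2))"
    by (auto simp: prism_word_def)
next
  fix x y
  assume "x \<in> verts (cart_prod (complete_graph (Suc m)) (complete_graph 2))"
    and "y \<in> verts (cart_prod (complete_graph (Suc m)) (complete_graph 2))" and "x \<noteq> y"
  then show "adj (cart_prod (complete_graph (Suc m)) (complete_graph 2)) x y \<longleftrightarrow>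
      alternate (prism_word m) x y"
    by (cases x; cases y) (auto simp: alternate_prism_word_iff)
qed

lemma wrl_le_length: "represents G w \<Longrightarrow> wrl G \<le> enat (length w)"
  unfolding wrl_def by (auto intro: INF_lower)

theorem mainTheorem5:
  fixes n :: nat
  assumes "n \<ge> 2"
  shows "wrl (cart_prod (complete_graph n) (complete_graph 2)) \<le> enat (5 * n - 4)"
proof -
  have "Suc (n - 1) = n" and "length (prism_word (n - 1)) = 5 * n - 4"
    using assms by (simp_all add: length_prism_word)
  then show ?thesis
    using wrl_le_length[OF represents_prism_word[of "n - 1"]] by simp
qed

end
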